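(* Let $G_1$ and $G_2$ be connected $k$-regular graphs with $|V(G_1)|=|V(G_2)|=n$ and $Z(G_1)\neq Z(G_2)$. Let $m\geq n$, and let $G'=(G_1\vee P_m)\cup G_2$ and $G''=(G_2\vee P_m)\cup G_1$, where $\cup$ denotes disjoint union. Then $G'$ and $G''$ are nonisomorphic graphs that are cospectral with respect to the adjacency matrix, and $Z(G')\neq Z(G'')$.
   Context: Graphs are finite, simple, undirected. $P_m$ is the path on $m$ vertices. The join $G\vee H$ is the disjoint union of $G$ and $H$ together with all edges $\{u,v\}$, $u\in V(G)$, $v\in V(H)$. The zero forcing number $Z(G)$ is the minimum size of a set $S\subseteq V(G)$ such that, if the vertices of $S$ are colored blue and all others white, repeated application of the rule "a blue vertex with exactly one white neighbor forces that neighbor to become blue" eventually makes every vertex blue. *)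

theory Defs
  imports Main "Jordan_Normal_Form.Char_Poly"
begin

record 'a graph =
  verts :: "'a set"
  adj :: "'a \<Rightarrow> 'a \<Rightarrow> bool"

definition sgraph :: "('a, 'b) graph_scheme \<Rightarrow> bool" where
  "sgraph G \<longleftrightarrow> finite (verts G) \<and>
     (\<forall>u v. adj G u v \<longrightarrow> u \<in> verts G \<and> v \<in> verts G \<and> u \<noteq> v \<and> adj G v u)"

definition neighbors :: "('a, 'b) graph_scheme \<Rightarrow> 'a \<Rightarrow> 'a set" where
  "neighbors G v = {u. adj G v u}"

definition regular :: "nat \<Rightarrow> ('a, 'b) graph_scheme \<Rightarrow> bool" where
  "regular k G \<longleftrightarrow> (\<forall>v\<in>verts G. card (neighbors G v) = k)"

definition connected_graph :: "('a, 'b) graph_scheme \<Rightarrow> bool" where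
  "connected_graph G \<longleftrightarrow> verts G \<noteq> {} \<and>
     (\<forall>u\<in>verts G. \<forall>v\<in>verts G. (u, v) \<in> {(x, y). adj G x y}\<^sup>*)"

definition path_graph :: "nat \<Rightarrow> nat graph" where
  "path_graph m = \<lparr> verts = {..<m},
     adj = (\<lambda>i j. i < m \<and> j < m \<and> (j = i + 1 \<or> i = j + 1)) \<rparr>"

definition disj_union :: "'a graph \<Rightarrow> 'b graph \<Rightarrow> ('a + 'b) graph" where
  "disj_union G H = \<lparr> verts = Inl ` verts G \<union> Inr ` verts H,
     adj = (\<lambda>x y. case (x, y) of
              (Inl a, Inl b) \<Rightarrow> adj G a b
            | (Inr a, Inr b) \<Rightarrow> adj H a b
            | _ \<Rightarrow> False) \<rparr>"

definition graph_join :: "'a graph \<Rightarrow> 'b graph \<Rightarrow> ('a + 'b) graph" where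
  "graph_join G H = \<lparr> verts = Inl ` verts G \<union> Inr ` verts H,
     adj = (\<lambda>x y. case (x, y) of
              (Inl a, Inl b) \<Rightarrow> adj G a b
            | (Inr a, Inr b) \<Rightarrow> adj H a b
            | (Inl a, Inr b) \<Rightarrow> a \<in> verts G \<and> b \<in> verts H
            | (Inr a, Inl b) \<Rightarrow> a \<in> verts H \<and> b \<in> verts G) \<rparr>"

definition graph_iso :: "'a graph \<Rightarrow> 'b graph \<Rightarrow> bool" where
  "graph_iso G H \<longleftrightarrow> (\<exists>f. bij_betw f (verts G) (verts H) \<and>
     (\<forall>u\<in>verts G. \<forall>v\<in>verts G. adj G u v \<longleftrightarrow> adj H (f u) (f v)))"

text \<open>Set of vertices that are eventually blue, starting from blue set S, under the
  rule: a blue vertex u with exactly one white neighbour v forces v.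
  (The final coloring is independent of the order of forces.)\<close>
inductive_set forced_closure :: "'a graph \<Rightarrow> 'a set \<Rightarrow> 'a set"
  for G :: "'a graph" and S :: "'a set" where
  init: "x \<in> S \<Longrightarrow> x \<in> forced_closure G S"
| force: "\<lbrakk> u \<in> forced_closure G S; u \<in> verts G; adj G u v;
            \<forall>w. adj G u w \<and> w \<noteq> v \<longrightarrow> w \<in> forced_closure G S \<rbrakk>
          \<Longrightarrow> v \<in> forced_closure G S"

definition zero_forcing_set :: "'a graph \<Rightarrow> 'a set \<Rightarrow> bool" where
  "zero_forcing_set G S \<longleftrightarrow> S \<subseteq> verts G \<and> forced_closure G S = verts G"

definition zero_forcing_number :: "'a graph \<Rightarrow> nat" where
  "zero_forcing_number G = Min (card ` {S. zero_forcing_set G S})"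

text \<open>Adjacency matrix w.r.t. an (arbitrary, fixed) enumeration of the vertices;
  its characteristic polynomial does not depend on the enumeration.\<close>
definition vertex_enum :: "'a graph \<Rightarrow> nat \<Rightarrow> 'a" where
  "vertex_enum G = (SOME f. bij_betw f {..<card (verts G)} (verts G))"

definition adj_matrix :: "'a graph \<Rightarrow> real mat" where
  "adj_matrix G = mat (card (verts G)) (card (verts G))
     (\<lambda>(i, j). if adj G (vertex_enum G i) (vertex_enum G j) then 1 else 0)"

definition cospectral :: "'a graph \<Rightarrow> 'b graph \<Rightarrow> bool" where
  "cospectral G H \<longleftrightarrow> char_poly (adj_matrix G) = char_poly (adj_matrix H)"

end

theory Submission
  imports Defs
begin

(* Z is additive over disjoint unions.  For m >= n the join G_i v P_m has minimum degree
   n + 1, so Z(G_i v P_m) >= n + 1, and V(G_i) together with an end of the path is a zero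
   forcing set of that size.  Hence Z(G') = n + 1 + Z(G_2) and Z(G'') = n + 1 + Z(G_1)
   differ, which also rules out an isomorphism.  For cospectrality identify the vertices of
   G'' with those of G' by swapping G_1 and G_2, let s be +1 on G_1, 0 on P_m and -1 on G_2,
   and let p be the indicator of P_m.  Then A' - A'' = s p^T + p s^T, and k-regularity gives
   s^T A' = k s^T + n p^T and A'' s = k s - n p.  Consequently the Householder reflection
   T = I - s s^T / n (an involution, as |s|^2 = 2n) satisfies T A' = A'' T. *)

lemma verts_disj_union [simp]: "verts (disj_union G H) = verts G <+> verts H"
  by (simp add: disj_union_def Plus_def)

lemma adj_disj_union [simp]:
  "adj (disj_union G H) (Inl a) (Inl b) = adj G a b"
  "adj (disj_union G H) (Inr c) (Inr d) = adj H c d"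
  "\<not> adj (disj_union G H) (Inl a) (Inr d)"
  "\<not> adj (disj_union G H) (Inr c) (Inl b)"
  by (simp_all add: disj_union_def)

lemma verts_graph_join [simp]: "verts (graph_join G H) = verts G <+> verts H"
  by (simp add: graph_join_def Plus_def)

lemma adj_graph_join [simp]:
  "adj (graph_join G H) (Inl a) (Inl b) = adj G a b"
  "adj (graph_join G H) (Inr c) (Inr d) = adj H c d"
  "adj (graph_join G H) (Inl a) (Inr d) \<longleftrightarrow> a \<in> verts G \<and> d \<in> verts H"
  "adj (graph_join G H) (Inr c) (Inl b) \<longleftrightarrow> c \<in> verts H \<and> b \<in> verts G"
  by (simp_all add: graph_join_def)

lemma verts_path_graph [simp]: "verts (path_graph m) = {..<m}"
  and adj_path_graph [simp]:
    "adj (path_graph m) i j \<longleftrightarrow> i < m \<and> j < m \<and> (j = i + 1 \<or> i = j + 1)"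
  by (simp_all add: path_graph_def)

lemma sgraph_path_graph: "sgraph (path_graph m)"
  by (auto simp: sgraph_def)

lemma sgraph_graph_join: "sgraph G \<Longrightarrow> sgraph H \<Longrightarrow> sgraph (graph_join G H)"
  unfolding sgraph_def graph_join_def by (auto simp: Plus_def split: sum.splits)

lemma sgraph_disj_union: "sgraph G \<Longrightarrow> sgraph H \<Longrightarrow> sgraph (disj_union G H)"
  unfolding sgraph_def disj_union_def by (auto simp: Plus_def split: sum.splits)

lemma sgraph_finite: "sgraph G \<Longrightarrow> finite (verts G)"
  by (simp add: sgraph_def)

lemma neighbors_subset_verts: "sgraph G \<Longrightarrow> neighbors G v \<subseteq> verts G"
  by (auto simp: sgraph_def neighbors_def)

lemma neighbors_disj_union [simp]:
  "neighbors (disj_union G H) (Inl a) = Inl ` neighbors G a"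
  "neighbors (disj_union G H) (Inr b) = Inr ` neighbors H b"
  unfolding neighbors_def disj_union_def
  by (auto simp: image_iff split: sum.splits) (metis sum.exhaust)+

lemma connected_graph_has_neighbor:
  assumes "connected_graph G" "2 \<le> card (verts G)" "a \<in> verts G"
  shows "neighbors G a \<noteq> {}"
proof -
  have "\<not> verts G \<subseteq> {a}"
    using assms(2) card_mono[of "{a}" "verts G"] by auto
  then obtain b where "b \<in> verts G" "b \<noteq> a" by auto
  have "(a, b) \<in> {(x, y). adj G x y}\<^sup>*"
    using assms(1,3) \<open>b \<in> verts G\<close> by (auto simp: connected_graph_def)
  then show ?thesis
    using \<open>b \<noteq> a\<close> by (cases rule: converse_rtranclE) (auto simp: neighbors_def)
qed

lemma forced_closure_subset_verts:
  assumes "sgraph G" "S \<subseteq> verts G"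
  shows "forced_closure G S \<subseteq> verts G"
proof
  fix x assume "x \<in> forced_closure G S"
  then show "x \<in> verts G"
    by induction (use assms in \<open>auto simp: sgraph_def\<close>)
qed

lemma forced_closure_subset_if_no_force:
  assumes "\<forall>u\<in>S. card (neighbors G u - S) \<noteq> 1"
  shows "forced_closure G S \<subseteq> S"
proof
  fix x assume "x \<in> forced_closure G S"
  then show "x \<in> S"
  proof induction
    case (force u v)
    show ?case
    proof (rule ccontr)
      assume "v \<notin> S"
      with force have "neighbors G u - S = {v}"
        by (auto simp: neighbors_def)
      with assms force show False by auto
    qed
  qed
qed

lemma forced_closure_map:
  assumes "f ` verts G \<subseteq> verts H"
    and "\<And>u. u \<in> verts G \<Longrightarrow> neighbors H (f u) = f ` neighbors G u"
    and "f ` S \<subseteq> T"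
  shows "f ` forced_closure G S \<subseteq> forced_closure H T"
proof clarify
  fix x assume "x \<in> forced_closure G S"
  then show "f x \<in> forced_closure H T"
  proof induction
    case (init x)
    then show ?case using assms(3) by (auto intro: forced_closure.init)
  next
    case (force u v)
    have nbrs: "neighbors H (f u) = f ` neighbors G u" using assms(2) force.hyps(2) .
    show ?case
    proof (rule forced_closure.force)
      show "f u \<in> forced_closure H T" "f u \<in> verts H"
        using force assms(1) by auto
      show "adj H (f u) (f v)"
        using nbrs force.hyps(3) by (auto simp: neighbors_def)
      show "\<forall>w. adj H (f u) w \<and> w \<noteq> f v \<longrightarrow> w \<in> forced_closure H T"
        using nbrs force.IH by (fastforce simp: neighbors_def)
    qed
  qed
qed

lemma zero_forcing_set_verts: "sgraph G \<Longrightarrow> zero_forcing_set G (verts G)"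
  using forced_closure_subset_verts[of G "verts G"] forced_closure.init[of _ "verts G" G]
  by (auto simp: zero_forcing_set_def)

lemma finite_zero_forcing_sets: "finite (verts G) \<Longrightarrow> finite {S. zero_forcing_set G S}"
  by (rule finite_subset[of _ "Pow (verts G)"]) (auto simp: zero_forcing_set_def)

lemma zero_forcing_number_le:
  "sgraph G \<Longrightarrow> zero_forcing_set G S \<Longrightarrow> zero_forcing_number G \<le> card S"
  unfolding zero_forcing_number_def
  by (intro Min_le) (auto simp: finite_zero_forcing_sets sgraph_finite)

lemma zero_forcing_number_attained:
  assumes "sgraph G"
  obtains S where "zero_forcing_set G S" "card S = zero_forcing_number G"
proof -
  have "zero_forcing_number G \<in> card ` {S. zero_forcing_set G S}"
    unfolding zero_forcing_number_def
    using assms zero_forcing_set_verts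
    by (intro Min_in) (auto simp: finite_zero_forcing_sets sgraph_finite)
  then show ?thesis using that by auto
qed

lemma le_zero_forcing_number:
  assumes "sgraph G" "\<And>S. zero_forcing_set G S \<Longrightarrow> d \<le> card S"
  shows "d \<le> zero_forcing_number G"
  using assms by (metis zero_forcing_number_attained)

lemma zero_forcing_number_le_card: "sgraph G \<Longrightarrow> zero_forcing_number G \<le> card (verts G)"
  by (simp add: zero_forcing_number_le zero_forcing_set_verts)

lemma zero_forcing_number_pos:
  assumes "sgraph G" "verts G \<noteq> {}"
  shows "0 < zero_forcing_number G"
proof -
  have "S \<noteq> {}" if "zero_forcing_set G S" for S
    using that assms(2) forced_closure_subset_if_no_force[of "{}" G]
    by (auto simp: zero_forcing_set_def)
  moreover have "finite S" if "zero_forcing_set G S" for S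
    using that assms(1) by (auto simp: zero_forcing_set_def sgraph_def intro: finite_subset)
  ultimately show ?thesis
    using le_zero_forcing_number[OF assms(1), of 1] by (simp add: Suc_le_eq card_gt_0_iff)
qed

text \<open>A zero forcing set other than the whole vertex set must contain a vertex that
  performs the first force; that vertex and all but one of its neighbours are in the set.\<close>
lemma min_degree_le_zero_forcing_number:
  assumes G: "sgraph G" and deg: "\<forall>u\<in>verts G. d \<le> card (neighbors G u)"
    and "d \<le> card (verts G)"
  shows "d \<le> zero_forcing_number G"
proof (rule le_zero_forcing_number[OF G])
  fix S assume S: "zero_forcing_set G S"
  then have SV: "S \<subseteq> verts G" and cl: "forced_closure G S = verts G"
    by (auto simp: zero_forcing_set_def)
  have "finite S" using SV G sgraph_finite finite_subset by blast
  show "d \<le> card S"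
  proof (cases "S = verts G")
    case True then show ?thesis using assms(3) by simp
  next
    case False
    then obtain u where u: "u \<in> S" and "card (neighbors G u - S) = 1"
      using forced_closure_subset_if_no_force[of S G] cl SV by blast
    then obtain v where "neighbors G u - S = {v}" by (auto simp: card_Suc_eq)
    moreover have "u \<notin> neighbors G u" using G by (auto simp: sgraph_def neighbors_def)
    ultimately have "neighbors G u \<subseteq> insert v (S - {u})" by auto
    then have "card (neighbors G u) \<le> card (insert v (S - {u}))"
      using \<open>finite S\<close> by (intro card_mono) auto
    also have "\<dots> \<le> Suc (card (S - {u}))"
      using \<open>finite S\<close> by (simp add: card_insert_if)
    also have "\<dots> = card S"
      by (rule card_Suc_Diff1[OF \<open>finite S\<close> u])
    finally show ?thesis using deg u SV by fastforce
  qed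
qed

lemma graph_iso_sym: "graph_iso G H \<Longrightarrow> graph_iso H G"
proof -
  assume "graph_iso G H"
  then obtain f where f: "bij_betw f (verts G) (verts H)"
    and adj: "\<forall>u\<in>verts G. \<forall>v\<in>verts G. adj G u v \<longleftrightarrow> adj H (f u) (f v)"
    by (auto simp: graph_iso_def)
  let ?g = "inv_into (verts G) f"
  have g: "bij_betw ?g (verts H) (verts G)"
    using f by (rule bij_betw_inv_into)
  have "adj H u v \<longleftrightarrow> adj G (?g u) (?g v)" if "u \<in> verts H" "v \<in> verts H" for u v
  proof -
    have "?g u \<in> verts G" "?g v \<in> verts G"
      using g that by (simp_all add: bij_betw_apply)
    then have "adj G (?g u) (?g v) \<longleftrightarrow> adj H (f (?g u)) (f (?g v))"
      using adj by blast
    moreover have "f (?g u) = u" "f (?g v) = v"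
      using f that by (simp_all add: bij_betw_inv_into_right)
    ultimately show ?thesis by simp
  qed
  with g show "graph_iso H G" by (auto simp: graph_iso_def)
qed

lemma neighbors_iso:
  assumes G: "sgraph G" and H: "sgraph H" and f: "bij_betw f (verts G) (verts H)"
    and adj: "\<forall>u\<in>verts G. \<forall>v\<in>verts G. adj G u v \<longleftrightarrow> adj H (f u) (f v)"
    and u: "u \<in> verts G"
  shows "neighbors H (f u) = f ` neighbors G u"
proof
  show "f ` neighbors G u \<subseteq> neighbors H (f u)"
  proof clarify
    fix v assume "v \<in> neighbors G u"
    then have "v \<in> verts G" "adj G u v"
      using neighbors_subset_verts[OF G] by (auto simp: neighbors_def)
    then show "f v \<in> neighbors H (f u)"
      using u adj by (simp add: neighbors_def)
  qed
  show "neighbors H (f u) \<subseteq> f ` neighbors G u"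
  proof
    fix w assume w: "w \<in> neighbors H (f u)"
    then have "w \<in> f ` verts G"
      using neighbors_subset_verts[OF H] f by (auto simp: bij_betw_def)
    then obtain v where v: "v \<in> verts G" "w = f v" by blast
    then show "w \<in> f ` neighbors G u"
      using w u adj by (simp add: neighbors_def)
  qed
qed

lemma zero_forcing_number_le_if_iso:
  assumes G: "sgraph G" and H: "sgraph H" and "graph_iso G H"
  shows "zero_forcing_number H \<le> zero_forcing_number G"
proof -
  obtain f where f: "bij_betw f (verts G) (verts H)"
    and adj: "\<forall>u\<in>verts G. \<forall>v\<in>verts G. adj G u v \<longleftrightarrow> adj H (f u) (f v)"
    using assms(3) by (auto simp: graph_iso_def)
  have fG: "f ` verts G = verts H"
    using f by (simp add: bij_betw_def)
  obtain S where S: "zero_forcing_set G S" "card S = zero_forcing_number G"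
    using zero_forcing_number_attained[OF G] .
  then have SV: "S \<subseteq> verts G" by (simp add: zero_forcing_set_def)
  then have fSV: "f ` S \<subseteq> verts H"
    using fG by blast
  have "f ` forced_closure G S \<subseteq> forced_closure H (f ` S)"
    by (rule forced_closure_map) (use fG neighbors_iso[OF G H f adj] in auto)
  then have "zero_forcing_set H (f ` S)"
    using S(1) fG fSV forced_closure_subset_verts[OF H fSV] by (auto simp: zero_forcing_set_def)
  moreover have "card (f ` S) = card S"
    using SV f by (metis bij_betw_def card_image inj_on_subset)
  ultimately show ?thesis
    using zero_forcing_number_le[OF H] S(2) by metis
qed

lemma zero_forcing_number_iso:
  assumes "sgraph G" "sgraph H" "graph_iso G H"
  shows "zero_forcing_number G = zero_forcing_number H"
  using assms by (blast intro: antisym zero_forcing_number_le_if_iso graph_iso_sym)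

lemma forced_closure_disj_unionD:
  assumes "x \<in> forced_closure (disj_union G H) S"
  shows "x \<in> forced_closure G (Inl -` S) <+> forced_closure H (Inr -` S)"
  using assms
proof induction
  case (init x)
  then show ?case by (cases x) (auto intro: forced_closure.init)
next
  case (force u v)
  note u = \<open>u \<in> forced_closure G (Inl -` S) <+> forced_closure H (Inr -` S)\<close>
    \<open>u \<in> verts (disj_union G H)\<close>
  note uv = \<open>adj (disj_union G H) u v\<close>
  show ?case
  proof (cases u)
    case (Inl a)
    with uv obtain b where v: "v = Inl b" by (cases v) auto
    have "b \<in> forced_closure G (Inl -` S)"
    proof (rule forced_closure.force)
      show "a \<in> forced_closure G (Inl -` S)" "a \<in> verts G" "adj G a b"
        using u uv Inl v by auto
      show "\<forall>w. adj G a w \<and> w \<noteq> b \<longrightarrow> w \<in> forced_closure G (Inl -` S)"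
      proof (intro allI impI)
        fix w assume "adj G a w \<and> w \<noteq> b"
        with force.IH Inl v show "w \<in> forced_closure G (Inl -` S)"
          by (auto dest: spec[of _ "Inl w"])
      qed
    qed
    then show ?thesis using v by auto
  next
    case (Inr a)
    with uv obtain b where v: "v = Inr b" by (cases v) auto
    have "b \<in> forced_closure H (Inr -` S)"
    proof (rule forced_closure.force)
      show "a \<in> forced_closure H (Inr -` S)" "a \<in> verts H" "adj H a b"
        using u uv Inr v by auto
      show "\<forall>w. adj H a w \<and> w \<noteq> b \<longrightarrow> w \<in> forced_closure H (Inr -` S)"
      proof (intro allI impI)
        fix w assume "adj H a w \<and> w \<noteq> b"
        with force.IH Inr v show "w \<in> forced_closure H (Inr -` S)"
          by (auto dest: spec[of _ "Inr w"])
      qed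
    qed
    then show ?thesis using v by auto
  qed
qed

lemma forced_closure_disj_union:
  "forced_closure (disj_union G H) S = forced_closure G (Inl -` S) <+> forced_closure H (Inr -` S)"
proof
  have "Inl ` forced_closure G (Inl -` S) \<subseteq> forced_closure (disj_union G H) S"
    by (rule forced_closure_map) (auto simp: Plus_def)
  moreover have "Inr ` forced_closure H (Inr -` S) \<subseteq> forced_closure (disj_union G H) S"
    by (rule forced_closure_map) (auto simp: Plus_def)
  ultimately show "forced_closure G (Inl -` S) <+> forced_closure H (Inr -` S)
      \<subseteq> forced_closure (disj_union G H) S"
    by (auto simp: Plus_def)
qed (use forced_closure_disj_unionD in blast)

lemma Plus_vimage_Inl_Inr: "S = Inl -` S <+> Inr -` S"
  by (auto simp: Plus_def image_iff) (metis sum.exhaust)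

lemma vimage_Inl_Plus [simp]: "Inl -` (A <+> B) = A"
  and vimage_Inr_Plus [simp]: "Inr -` (A <+> B) = B"
  by (auto simp: Plus_def)

lemma zero_forcing_set_disj_union_iff:
  "zero_forcing_set (disj_union G H) S \<longleftrightarrow>
     zero_forcing_set G (Inl -` S) \<and> zero_forcing_set H (Inr -` S)"
proof -
  have "S \<subseteq> A <+> B \<longleftrightarrow> Inl -` S \<subseteq> A \<and> Inr -` S \<subseteq> B" for A B
    by (subst (1) Plus_vimage_Inl_Inr) auto
  moreover have "A <+> B = C <+> D \<longleftrightarrow> A = C \<and> B = D" for A C :: "'a set" and B D :: "'b set"
    by (metis vimage_Inl_Plus vimage_Inr_Plus)
  ultimately show ?thesis
    unfolding zero_forcing_set_def forced_closure_disj_union verts_disj_union by auto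
qed

lemma zero_forcing_number_disj_union:
  assumes G: "sgraph G" and H: "sgraph H"
  shows "zero_forcing_number (disj_union G H) = zero_forcing_number G + zero_forcing_number H"
proof (rule antisym)
  have fin_zf: "finite S" if "zero_forcing_set K S" "sgraph K" for K :: "'c graph" and S
    using that by (auto simp: zero_forcing_set_def sgraph_def intro: finite_subset)
  have GH: "sgraph (disj_union G H)" using G H by (rule sgraph_disj_union)
  obtain S1 where S1: "zero_forcing_set G S1" "card S1 = zero_forcing_number G"
    using zero_forcing_number_attained[OF G] .
  obtain S2 where S2: "zero_forcing_set H S2" "card S2 = zero_forcing_number H"
    using zero_forcing_number_attained[OF H] .
  have "zero_forcing_set (disj_union G H) (S1 <+> S2)"
    using S1 S2 by (simp add: zero_forcing_set_disj_union_iff)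
  then show "zero_forcing_number (disj_union G H) \<le> zero_forcing_number G + zero_forcing_number H"
    using zero_forcing_number_le[OF GH] S1 S2 fin_zf G H by (metis card_Plus)
  show "zero_forcing_number G + zero_forcing_number H \<le> zero_forcing_number (disj_union G H)"
  proof (rule le_zero_forcing_number[OF GH])
    fix S assume "zero_forcing_set (disj_union G H) S"
    then have S1: "zero_forcing_set G (Inl -` S)" and S2: "zero_forcing_set H (Inr -` S)"
      by (simp_all add: zero_forcing_set_disj_union_iff)
    have "card S = card (Inl -` S) + card (Inr -` S)"
      using Plus_vimage_Inl_Inr[of S] card_Plus fin_zf[OF S1 G] fin_zf[OF S2 H] by metis
    then show "zero_forcing_number G + zero_forcing_number H \<le> card S"
      using zero_forcing_number_le[OF G S1] zero_forcing_number_le[OF H S2] by simp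
  qed
qed

text \<open>With all of G blue, each path vertex i has the single white neighbour i + 1 once
  0, ..., i are blue, so the path is forced from one end.\<close>
lemma zero_forcing_set_join_path:
  assumes G: "sgraph G" and "0 < m"
  shows "zero_forcing_set (graph_join G (path_graph m)) (insert (Inr 0) (Inl ` verts G))"
    (is "zero_forcing_set ?J ?S")
proof -
  have path: "Inr i \<in> forced_closure ?J ?S" if "i < m" for i
    using that
  proof (induction i rule: less_induct)
    case (less i)
    show ?case
    proof (cases i)
      case 0
      then show ?thesis by (auto intro: forced_closure.init)
    next
      case (Suc j)
      show ?thesis
      proof (rule forced_closure.force[of "Inr j"])
        show "Inr j \<in> forced_closure ?J ?S" "Inr j \<in> verts ?J" "adj ?J (Inr j) (Inr i)"
          using less Suc by auto
        show "\<forall>w. adj ?J (Inr j) w \<and> w \<noteq> Inr i \<longrightarrow> w \<in> forced_closure ?J ?S"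
        proof (intro allI impI)
          fix w assume w: "adj ?J (Inr j) w \<and> w \<noteq> Inr i"
          show "w \<in> forced_closure ?J ?S"
          proof (cases w)
            case (Inl a)
            then show ?thesis using w by (auto intro: forced_closure.init)
          next
            case (Inr j')
            then show ?thesis using w less Suc by auto
          qed
        qed
      qed
    qed
  qed
  have J: "sgraph ?J" using G sgraph_path_graph by (rule sgraph_graph_join)
  have S: "?S \<subseteq> verts ?J" using assms(2) by auto
  have "verts ?J \<subseteq> forced_closure ?J ?S"
    using path by (auto intro: forced_closure.init)
  then show ?thesis
    using forced_closure_subset_verts[OF J S] S by (auto simp: zero_forcing_set_def)
qed

lemma min_degree_join_path:
  assumes G: "sgraph G" and nbr: "\<forall>a\<in>verts G. neighbors G a \<noteq> {}"
    and "2 \<le> m" "card (verts G) \<le> m" and x: "x \<in> verts (graph_join G (path_graph m))"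
  shows "card (verts G) + 1 \<le> card (neighbors (graph_join G (path_graph m)) x)"
proof -
  let ?J = "graph_join G (path_graph m)"
  have J: "sgraph ?J" using G sgraph_path_graph by (rule sgraph_graph_join)
  have fin: "finite (neighbors ?J x)"
    using neighbors_subset_verts[OF J] sgraph_finite[OF J] by (rule finite_subset)
  show ?thesis
  proof (cases x)
    case (Inl a)
    with x nbr obtain c where c: "c \<in> neighbors G a" by auto
    have "insert (Inl c) (Inr ` {..<m}) \<subseteq> neighbors ?J x"
      using Inl x c by (auto simp: neighbors_def)
    then have "card (insert (Inl c) (Inr ` {..<m})) \<le> card (neighbors ?J x)"
      using fin by (rule card_mono[rotated])
    moreover have "card (insert (Inl c) (Inr ` {..<m}) :: ('a + nat) set) = m + 1"
      by (subst card_insert_disjoint) (auto simp: card_image)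
    ultimately show ?thesis using assms(4) by simp
  next
    case (Inr i)
    define j where "j = (if i + 1 < m then i + 1 else i - 1)"
    have "insert (Inr j) (Inl ` verts G) \<subseteq> neighbors ?J x"
      using Inr x assms(3) by (auto simp: neighbors_def j_def)
    then have "card (insert (Inr j) (Inl ` verts G)) \<le> card (neighbors ?J x)"
      using fin by (rule card_mono[rotated])
    moreover have "card (insert (Inr j) (Inl ` verts G) :: ('a + nat) set) = card (verts G) + 1"
      using sgraph_finite[OF G] by (subst card_insert_disjoint) (auto simp: card_image)
    ultimately show ?thesis by simp
  qed
qed

lemma zero_forcing_number_join_path:
  assumes G: "sgraph G" and nbr: "\<forall>a\<in>verts G. neighbors G a \<noteq> {}"
    and "2 \<le> m" "card (verts G) \<le> m"
  shows "zero_forcing_number (graph_join G (path_graph m)) = card (verts G) + 1"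
proof (rule antisym)
  let ?J = "graph_join G (path_graph m)"
  have J: "sgraph ?J" using G sgraph_path_graph by (rule sgraph_graph_join)
  have "card (insert (Inr 0) (Inl ` verts G) :: ('a + nat) set) = card (verts G) + 1"
    using sgraph_finite[OF G] by (subst card_insert_disjoint) (auto simp: card_image)
  then show "zero_forcing_number ?J \<le> card (verts G) + 1"
    using zero_forcing_number_le[OF J zero_forcing_set_join_path[OF G]] assms(3) by simp
  have "card (verts ?J) = card (verts G) + m"
    using G by (simp add: card_Plus sgraph_finite)
  then show "card (verts G) + 1 \<le> zero_forcing_number ?J"
    using min_degree_le_zero_forcing_number[OF J] min_degree_join_path[OF assms] assms(3)
    by simp
qed

lemma vertex_enum_bij:
  assumes "finite (verts G)"
  shows "bij_betw (vertex_enum G) {..<card (verts G)} (verts G)"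
proof -
  have "\<exists>f. bij_betw f {..<card (verts G)} (verts G)"
    using ex_bij_betw_nat_finite[OF assms] by (simp add: atLeast0LessThan)
  then show ?thesis unfolding vertex_enum_def by (rule someI_ex)
qed

lemma mult_mat_reindex:
  assumes "bij_betw e {..<n} V"
  shows "mat n n (\<lambda>(i, j). A i (e j)) * mat n n (\<lambda>(i, j). B (e i) j)
    = mat n n (\<lambda>(i, l). \<Sum>z\<in>V. A i z * B z l)"
proof (rule eq_matI)
  fix i l assume "i < dim_row (mat n n (\<lambda>(i, l). \<Sum>z\<in>V. A i z * B z l))"
    and "l < dim_col (mat n n (\<lambda>(i, l). \<Sum>z\<in>V. A i z * B z l))"
  then have "i < n" "l < n" by simp_all
  then show "(mat n n (\<lambda>(i, j). A i (e j)) * mat n n (\<lambda>(i, j). B (e i) j)) $$ (i, l)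
      = mat n n (\<lambda>(i, l). \<Sum>z\<in>V. A i z * B z l) $$ (i, l)"
    using sum.reindex_bij_betw[OF assms, of "\<lambda>z. A i z * B z l"]
    by (simp add: scalar_prod_def atLeast0LessThan)
qed simp_all

lemma similar_mat_if_intertwined:
  assumes carrier: "A \<in> carrier_mat n n" "B \<in> carrier_mat n n"
    "P \<in> carrier_mat n n" "Q \<in> carrier_mat n n"
    and "P * Q = 1\<^sub>m n" "Q * P = 1\<^sub>m n" "P * A = B * P"
  shows "similar_mat B A"
proof (rule similar_matI[where P = P and Q = Q and n = n])
  have "B = B * (P * Q)"
    using carrier(2) by (simp add: assms(5))
  also have "\<dots> = P * A * Q"
    by (simp add: assoc_mult_mat[OF carrier(2-4), symmetric] assms(7))
  finally show "B = P * A * Q" .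
qed (use assms in auto)

lemma cospectral_if_intertwined:
  fixes G :: "'a graph" and H :: "'b graph" and T :: "'a \<Rightarrow> 'a \<Rightarrow> real"
  assumes fin: "finite (verts G)" and f: "bij_betw f (verts G) (verts H)"
    and inv: "\<And>x y. x \<in> verts G \<Longrightarrow> y \<in> verts G \<Longrightarrow>
      (\<Sum>z\<in>verts G. T x z * T z y) = of_bool (x = y)"
    and intertw: "\<And>x y. x \<in> verts G \<Longrightarrow> y \<in> verts G \<Longrightarrow>
      (\<Sum>z\<in>verts G. T x z * of_bool (adj G z y))
        = (\<Sum>z\<in>verts G. of_bool (adj H (f x) (f z)) * T z y)"
  shows "cospectral G H"
proof -
  define n where "n = card (verts G)"
  define e where "e = vertex_enum G"
  define s where "s = inv_into (verts G) f \<circ> vertex_enum H"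
  have nH: "card (verts H) = n"
    using bij_betw_same_card[OF f] by (simp add: n_def)
  have eH: "bij_betw (vertex_enum H) {..<n} (verts H)"
    using vertex_enum_bij[of H] bij_betw_finite[OF f] fin nH by simp
  have e: "bij_betw e {..<n} (verts G)"
    unfolding e_def n_def using fin by (rule vertex_enum_bij)
  have s: "bij_betw s {..<n} (verts G)"
    unfolding s_def using eH bij_betw_inv_into[OF f] by (rule bij_betw_trans)
  have fs: "f (s i) = vertex_enum H i" if "i < n" for i
    using that eH f by (simp add: s_def bij_betw_apply bij_betw_inv_into_right)
  define P where "P = mat n n (\<lambda>(i, j). T (s i) (e j))"
  define Q where "Q = mat n n (\<lambda>(i, j). T (e i) (s j))"
  have AG: "adj_matrix G = mat n n (\<lambda>(i, j). of_bool (adj G (e i) (e j)))"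
    by (simp add: adj_matrix_def e_def n_def of_bool_def)
  have AH: "adj_matrix H = mat n n (\<lambda>(i, j). of_bool (adj H (f (s i)) (f (s j))))"
    unfolding adj_matrix_def nH by (rule cong_mat) (simp_all add: fs of_bool_def)
  have PQ: "P * Q = 1\<^sub>m n"
    unfolding P_def Q_def mult_mat_reindex[OF e, of "\<lambda>i z. T (s i) z" "\<lambda>z j. T z (s j)"]
    by (rule eq_matI)
      (simp_all add: inv bij_betw_apply[OF s] inj_on_eq_iff[OF bij_betw_imp_inj_on[OF s]])
  have QP: "Q * P = 1\<^sub>m n"
    unfolding P_def Q_def mult_mat_reindex[OF s, of "\<lambda>i z. T (e i) z" "\<lambda>z j. T z (e j)"]
    by (rule eq_matI)
      (simp_all add: inv bij_betw_apply[OF e] inj_on_eq_iff[OF bij_betw_imp_inj_on[OF e]])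
  have "P * adj_matrix G = mat n n (\<lambda>(i, l). \<Sum>z\<in>verts G. T (s i) z * of_bool (adj G z (e l)))"
    unfolding P_def AG by (rule mult_mat_reindex[OF e])
  also have "\<dots> = mat n n (\<lambda>(i, l). \<Sum>z\<in>verts G. of_bool (adj H (f (s i)) (f z)) * T z (e l))"
    by (rule cong_mat) (simp_all add: intertw bij_betw_apply[OF s] bij_betw_apply[OF e])
  also have "\<dots> = adj_matrix H * P"
    unfolding AH P_def by (rule mult_mat_reindex[OF s, symmetric])
  finally have "P * adj_matrix G = adj_matrix H * P" .
  then have "similar_mat (adj_matrix H) (adj_matrix G)"
    using PQ QP by (intro similar_mat_if_intertwined) (simp_all add: AG AH P_def Q_def)
  then show ?thesis
    unfolding cospectral_def by (simp add: char_poly_similar)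
qed

definition householder :: "'a set \<Rightarrow> ('a \<Rightarrow> real) \<Rightarrow> 'a \<Rightarrow> 'a \<Rightarrow> real" where
  "householder V w x y = of_bool (x = y) - 2 * w x * w y / (\<Sum>z\<in>V. (w z)\<^sup>2)"

lemma householder_involutive:
  assumes "finite V" "x \<in> V" "y \<in> V" and w: "(\<Sum>z\<in>V. (w z)\<^sup>2) \<noteq> 0"
  shows "(\<Sum>z\<in>V. householder V w x z * householder V w z y) = of_bool (x = y)"
proof -
  define c where "c = (\<Sum>z\<in>V. (w z)\<^sup>2)"
  have c: "c \<noteq> 0" using w by (simp add: c_def)
  have pointwise: "householder V w x z * householder V w z y
      = (if z = x then of_bool (x = y) - 2 * w x * w y / c else 0)
        - (if z = y then 2 * w x * w y / c else 0) + 4 * w x * w y / c\<^sup>2 * (w z)\<^sup>2" for z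
    unfolding householder_def c_def[symmetric] using c
    by (cases "z = x"; cases "z = y") (auto simp: field_simps power2_eq_square)
  have "(\<Sum>z\<in>V. householder V w x z * householder V w z y)
      = (\<Sum>z\<in>V. if z = x then of_bool (x = y) - 2 * w x * w y / c else 0)
        - (\<Sum>z\<in>V. if z = y then 2 * w x * w y / c else 0) + 4 * w x * w y / c\<^sup>2 * c"
    unfolding pointwise sum.distrib sum_subtractf sum_distrib_left[symmetric] c_def ..
  also have "\<dots> = of_bool (x = y)"
    using assms(1-3) c by (simp add: sum.delta field_simps power2_eq_square)
  finally show ?thesis .
qed

definition swap_sides :: "('a + 'c) + 'b \<Rightarrow> ('b + 'c) + 'a" where
  "swap_sides = case_sum (case_sum Inr (Inl \<circ> Inr)) (Inl \<circ> Inl)"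

definition side_sign :: "('a + 'c) + 'b \<Rightarrow> real" where
  "side_sign = case_sum (case_sum (\<lambda>_. 1) (\<lambda>_. 0)) (\<lambda>_. -1)"

definition middle_indicator :: "('a + 'c) + 'b \<Rightarrow> real" where
  "middle_indicator = case_sum (case_sum (\<lambda>_. 0) (\<lambda>_. 1)) (\<lambda>_. 0)"

lemma swap_sides_simps [simp]:
  "swap_sides (Inl (Inl a)) = Inr a" "swap_sides (Inl (Inr c)) = Inl (Inr c)"
  "swap_sides (Inr b) = Inl (Inl b)"
  by (simp_all add: swap_sides_def)

lemma swap_sides_swap_sides [simp]: "swap_sides (swap_sides x) = x"
  by (simp add: swap_sides_def split: sum.split)

lemma side_sign_simps [simp]:
  "side_sign (Inl (Inl a)) = 1" "side_sign (Inl (Inr c)) = 0" "side_sign (Inr b) = -1"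
  by (simp_all add: side_sign_def)

lemma middle_indicator_simps [simp]:
  "middle_indicator (Inl (Inl a)) = 0" "middle_indicator (Inl (Inr c)) = 1"
  "middle_indicator (Inr b) = 0"
  by (simp_all add: middle_indicator_def)

lemma card_adj_regular:
  assumes "sgraph G" "regular k G" "v \<in> verts G"
  shows "card (verts G \<inter> {u. adj G v u}) = k" "card (verts G \<inter> {u. adj G u v}) = k"
proof -
  have "verts G \<inter> {u. adj G v u} = neighbors G v" "verts G \<inter> {u. adj G u v} = neighbors G v"
    using assms(1) by (auto simp: sgraph_def neighbors_def)
  then show "card (verts G \<inter> {u. adj G v u}) = k" "card (verts G \<inter> {u. adj G u v}) = k"
    using assms(2,3) by (simp_all add: regular_def)
qed

context
  fixes G1 :: "'a graph" and G2 :: "'b graph" and H :: "'c graph" and k n :: nat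
  assumes G1: "sgraph G1" "regular k G1" "card (verts G1) = n"
    and G2: "sgraph G2" "regular k G2" "card (verts G2) = n"
    and H: "finite (verts H)"
begin

abbreviation G' where "G' \<equiv> disj_union (graph_join G1 H) G2"
abbreviation G'' where "G'' \<equiv> disj_union (graph_join G2 H) G1"

lemma finite_verts_parts: "finite (verts G1)" "finite (verts H)" "finite (verts G2)"
  using G1 G2 H by (simp_all add: sgraph_finite)

lemma sum_side_sign_sq: "(\<Sum>z\<in>verts G'. (side_sign z)\<^sup>2) = 2 * real n"
  by (simp add: sum.Plus finite_verts_parts G1 G2)

lemma sum_side_sign_adj:
  assumes "y \<in> verts G'"
  shows "(\<Sum>z\<in>verts G'. side_sign z * of_bool (adj G' z y))
    = real k * side_sign y + real n * middle_indicator y"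
  using assms G1 G2
  by (auto simp: sum.Plus finite_verts_parts card_adj_regular sum_negf
      simp del: sum_mult_of_bool_eq sum_of_bool_mult_eq)

lemma sum_adj_swap_sides_side_sign:
  assumes "x \<in> verts G'"
  shows "(\<Sum>z\<in>verts G'. of_bool (adj G'' (swap_sides x) (swap_sides z)) * side_sign z)
    = real k * side_sign x - real n * middle_indicator x"
  using assms G1 G2
  by (auto simp: sum.Plus finite_verts_parts card_adj_regular sum_negf
      simp del: sum_mult_of_bool_eq sum_of_bool_mult_eq)

text \<open>Entrywise form of A' - A'' = s p^T + p s^T: passing to G'' removes the edges between
  G1 and H and adds those between G2 and H.\<close>
lemma adj_swap_sides_eq:
  assumes "x \<in> verts G'" "y \<in> verts G'"
  shows "of_bool (adj G' x y) - side_sign x * middle_indicator y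
    = of_bool (adj G'' (swap_sides x) (swap_sides y)) + side_sign y * middle_indicator x"
  using assms by auto

lemma householder_intertwines:
  assumes "0 < n" "x \<in> verts G'" "y \<in> verts G'"
  shows "(\<Sum>z\<in>verts G'. householder (verts G') side_sign x z * of_bool (adj G' z y))
    = (\<Sum>z\<in>verts G'. of_bool (adj G'' (swap_sides x) (swap_sides z))
        * householder (verts G') side_sign z y)"
proof -
  have fin: "finite (verts G')" by (simp add: finite_verts_parts)
  have hh: "householder (verts G') side_sign u v
      = of_bool (u = v) - side_sign u * side_sign v / n" for u v
    unfolding householder_def sum_side_sign_sq using assms(1) by simp
  have "(\<Sum>z\<in>verts G'. (of_bool (x = z) - side_sign x * side_sign z / n) * of_bool (adj G' z y))
      = (\<Sum>z\<in>verts G'. (if z = x then of_bool (adj G' x y) else 0)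
          - side_sign x / n * (side_sign z * of_bool (adj G' z y)))"
    by (rule sum.cong) auto
  also have "\<dots> = of_bool (adj G' x y)
      - side_sign x / n * (real k * side_sign y + real n * middle_indicator y)"
    unfolding sum_subtractf sum_distrib_left[symmetric] sum_side_sign_adj[OF assms(3)]
    using assms(2) fin by simp
  also have "\<dots> = of_bool (adj G'' (swap_sides x) (swap_sides y))
      - side_sign y / n * (real k * side_sign x - real n * middle_indicator x)"
  proof -
    have expand: "side_sign x / n * (real k * side_sign y + real n * middle_indicator y)
        = real k * side_sign x * side_sign y / n + side_sign x * middle_indicator y"
      "side_sign y / n * (real k * side_sign x - real n * middle_indicator x)
        = real k * side_sign x * side_sign y / n - side_sign y * middle_indicator x"
      using assms(1) by (simp_all add: field_simps)
    show ?thesis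
      unfolding expand using adj_swap_sides_eq[OF assms(2,3)] by linarith
  qed
  also have "\<dots> = (\<Sum>z\<in>verts G'.
        (if z = y then of_bool (adj G'' (swap_sides x) (swap_sides y)) else 0)
        - side_sign y / n * (of_bool (adj G'' (swap_sides x) (swap_sides z)) * side_sign z))"
    unfolding sum_subtractf sum_distrib_left[symmetric] sum_adj_swap_sides_side_sign[OF assms(2)]
    using assms(3) fin by simp
  also have "\<dots> = (\<Sum>z\<in>verts G'. of_bool (adj G'' (swap_sides x) (swap_sides z))
      * (of_bool (z = y) - side_sign z * side_sign y / n))"
    by (rule sum.cong) auto
  finally show ?thesis unfolding hh .
qed

lemma cospectral_join_swap:
  assumes "0 < n"
  shows "cospectral G' G''"
proof (rule cospectral_if_intertwined)
  show "finite (verts G')" by (simp add: finite_verts_parts)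
  show "bij_betw swap_sides (verts G') (verts G'')"
    by (rule bij_betw_byWitness[where f' = swap_sides]) auto
  show "(\<Sum>z\<in>verts G'. householder (verts G') side_sign x z
      * householder (verts G') side_sign z y) = of_bool (x = y)" if "x \<in> verts G'" "y \<in> verts G'" for x y
    using that assms \<open>finite (verts G')\<close> sum_side_sign_sq by (intro householder_involutive) auto
qed (rule householder_intertwines[OF assms])

end

lemma zero_forcing_number_join_path_union:
  assumes G: "sgraph G" "connected_graph G" "2 \<le> card (verts G)" "card (verts G) \<le> m"
    and K: "sgraph K"
  shows "zero_forcing_number (disj_union (graph_join G (path_graph m)) K)
    = card (verts G) + 1 + zero_forcing_number K"
proof -
  have "zero_forcing_number (graph_join G (path_graph m)) = card (verts G) + 1"
    using G(1,3,4) connected_graph_has_neighbor[OF G(2,3)]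
    by (intro zero_forcing_number_join_path) auto
  then show ?thesis
    using G(1) K by (simp add: zero_forcing_number_disj_union sgraph_graph_join sgraph_path_graph)
qed

theorem theorem5p1:
  fixes G1 :: "'a graph" and G2 :: "'b graph" and k n m :: nat
  assumes "sgraph G1" and "sgraph G2"
    and "connected_graph G1" and "connected_graph G2"
    and "regular k G1" and "regular k G2"
    and "card (verts G1) = n" and "card (verts G2) = n"
    and "zero_forcing_number G1 \<noteq> zero_forcing_number G2"
    and "m \<ge> n"
  shows "\<not> graph_iso (disj_union (graph_join G1 (path_graph m)) G2)
                     (disj_union (graph_join G2 (path_graph m)) G1)
       \<and> cospectral (disj_union (graph_join G1 (path_graph m)) G2)
                    (disj_union (graph_join G2 (path_graph m)) G1)
       \<and> zero_forcing_number (disj_union (graph_join G1 (path_graph m)) G2)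
           \<noteq> zero_forcing_number (disj_union (graph_join G2 (path_graph m)) G1)"
proof -
  let ?G' = "disj_union (graph_join G1 (path_graph m)) G2"
  let ?G'' = "disj_union (graph_join G2 (path_graph m)) G1"
  have "0 < zero_forcing_number G1" "0 < zero_forcing_number G2"
    using assms(1-4) by (simp_all add: zero_forcing_number_pos connected_graph_def)
  moreover have "zero_forcing_number G1 \<le> n" "zero_forcing_number G2 \<le> n"
    using zero_forcing_number_le_card[OF assms(1)] zero_forcing_number_le_card[OF assms(2)]
      assms(7,8)
    by simp_all
  ultimately have n: "2 \<le> n" using assms(9) by linarith
  have Z_differ: "zero_forcing_number ?G' \<noteq> zero_forcing_number ?G''"
    using zero_forcing_number_join_path_union[of G1 m G2]
      zero_forcing_number_join_path_union[of G2 m G1] assms n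
    by simp
  moreover have "\<not> graph_iso ?G' ?G''"
    using Z_differ zero_forcing_number_iso assms(1,2)
    by (metis sgraph_disj_union sgraph_graph_join sgraph_path_graph)
  moreover have "cospectral ?G' ?G''"
    using assms n by (intro cospectral_join_swap) auto
  ultimately show ?thesis by blast
qed

end
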